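(* Let $n\ge2$ and $\rho\in\mathbb{C}\setminus\{-1,0,1\}$. If $z_k$ is a zero of $p_{2n}(\rho,z)$, then $z_k\neq0$, $z_k^{-1}$ is also a zero of $p_{2n}(\rho,z)$, $z_k\notin\{\rho,1/\rho\}$, and $$\lambda_k=\frac{z_k(1-\rho^2)}{(z_k-\rho)(1-\rho z_k)}=\frac{z_k^{-1}(1-\rho^2)}{(z_k^{-1}-\rho)(1-\rho z_k^{-1})}$$ is an eigenvalue of $K_n(\rho)$. Conversely, if $\lambda_k$ is an eigenvalue of $K_n(\rho)$, then $\lambda_k\neq0$ and the two numbers $$z_k=\tau_k+(\tau_k^2-1)^{1/2},\qquad z_k^{-1}=\tau_k-(\tau_k^2-1)^{1/2}$$ are zeros of $p_{2n}(\rho,z)$, where $\tau_k=\frac{\rho^2(\lambda_k+1)+\lambda_k-1}{2\lambda_k\rho}$.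
   Context: $K_n(\rho)=\left[\rho^{|j-k|}\right]_{j,k=1}^n$ ($n\times n$, $\rho\in\mathbb{C}$). $p_{2n}(\rho,z)=z^{2n}+(1+\rho^2)\sum_{k=1}^{n-1}z^{2k}-2\rho\sum_{k=0}^{n-1}z^{2k+1}+1$, a monic polynomial of degree $2n$ in $z$, equal to $\frac{z^{2n}(z-\rho)^2-(\rho z-1)^2}{z^2-1}$ for $z\ne\pm1$. *)

theory Defs
  imports Complex_Main "Jordan_Normal_Form.Char_Poly"
begin

definition KMS :: "nat \<Rightarrow> complex \<Rightarrow> complex mat" where
  "KMS n \<rho> = mat n n (\<lambda>(j, k). \<rho> ^ (nat \<bar>int j - int k\<bar>))"

definition p2n :: "nat \<Rightarrow> complex \<Rightarrow> complex \<Rightarrow> complex" where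
  "p2n n \<rho> z = z ^ (2 * n) + (1 + \<rho>\<^sup>2) * (\<Sum>k = 1..n - 1. z ^ (2 * k))
      - 2 * \<rho> * (\<Sum>k = 0..n - 1. z ^ (2 * k + 1)) + 1"

end

theory Submission
  imports Defs
begin

text \<open>
  Up to the factor \<open>1 - \<rho>\<^sup>2\<close>, the inverse of \<open>K\<^sub>n(\<rho>)\<close> is the tridiagonal
  matrix with diagonal \<open>(1, 1 + \<rho>\<^sup>2, \<dots>, 1 + \<rho>\<^sup>2, 1)\<close> and off-diagonal entries \<open>-\<rho>\<close>.
  Hence \<open>K\<^sub>n(\<rho>) v = \<lambda> v\<close> with \<open>\<lambda> \<noteq> 0\<close> is the three-term recurrence
  \<open>v\<^sub>j\<^sub>+\<^sub>1 = t v\<^sub>j - v\<^sub>j\<^sub>-\<^sub>1\<close>, where \<open>\<rho> t = 1 + \<rho>\<^sup>2 - (1 - \<rho>\<^sup>2) / \<lambda>\<close>, started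
  by the first row and closed by a boundary condition from the last row. The solution is
  \<open>v\<^sub>j = v\<^sub>0 s\<^sub>j(t)\<close> and the boundary condition reads \<open>s\<^sub>n(t) - \<rho> s\<^sub>n\<^sub>-\<^sub>1(t) = 0\<close>.
  Substituting \<open>t = z + 1/z\<close> turns \<open>z\<^sup>n (s\<^sub>n - \<rho> s\<^sub>n\<^sub>-\<^sub>1)\<close> into \<open>p\<^sub>2\<^sub>n(\<rho>, z)\<close>, so
  eigenvalues correspond to pairs \<open>z, 1/z\<close> of zeros of \<open>p\<^sub>2\<^sub>n\<close>, and solving
  \<open>z + 1/z = t\<close> gives the converse.
\<close>

section \<open>The polynomial \<open>p\<^sub>2\<^sub>n\<close> as a function of \<open>z + 1/z\<close>\<close>

lemma p2n_geometric_sums: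
  assumes "n \<ge> 1"
  shows "p2n n \<rho> z = (\<Sum>k<n + 1. (z\<^sup>2) ^ k) - 2 * \<rho> * z * (\<Sum>k<n. (z\<^sup>2) ^ k)
                         + \<rho>\<^sup>2 * z\<^sup>2 * (\<Sum>k<n - 1. (z\<^sup>2) ^ k)"
proof -
  obtain m where n: "n = Suc m" using assms by (cases n) auto
  have sq: "z ^ (2 * k) = (z\<^sup>2) ^ k" for k
    by (simp add: power_mult)
  have shift: "(\<Sum>k = 1..m. (z\<^sup>2) ^ k) = z\<^sup>2 * (\<Sum>k<m. (z\<^sup>2) ^ k)"
    by (simp add: sum.atLeast1_atMost_eq sum_distrib_left)
  have odd: "(\<Sum>k = 0..m. z ^ (2 * k + 1)) = z * (\<Sum>k<Suc m. (z\<^sup>2) ^ k)"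
    by (simp add: atLeast0AtMost lessThan_Suc_atMost sum_distrib_left sq)
  have first: "(\<Sum>k<Suc m. (z\<^sup>2) ^ k) = 1 + z\<^sup>2 * (\<Sum>k<m. (z\<^sup>2) ^ k)"
    by (subst sum.lessThan_Suc_shift) (simp add: sum_distrib_left)
  have "p2n n \<rho> z = (z\<^sup>2) ^ Suc m + (1 + \<rho>\<^sup>2) * (\<Sum>k = 1..m. (z\<^sup>2) ^ k)
                     - 2 * \<rho> * (\<Sum>k = 0..m. z ^ (2 * k + 1)) + 1"
    unfolding p2n_def n sq by simp
  with first show ?thesis
    unfolding shift odd n by (simp add: algebra_simps)
qed

lemma p2n_closed_form:
  assumes "n \<ge> 1"
  shows "(z\<^sup>2 - 1) * p2n n \<rho> z = z ^ (2 * n) * (z - \<rho>)\<^sup>2 - (\<rho> * z - 1)\<^sup>2"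
proof -
  obtain m where n: "n = Suc m" using assms by (cases n) auto
  have geom: "(z\<^sup>2 - 1) * (\<Sum>k<j. (z\<^sup>2) ^ k) = z ^ (2 * j) - 1" for j
    by (simp add: power_diff_1_eq power_mult)
  have "(z\<^sup>2 - 1) * p2n n \<rho> z = (z ^ (2 * Suc n) - 1) - 2 * \<rho> * z * (z ^ (2 * n) - 1)
                                  + \<rho>\<^sup>2 * z\<^sup>2 * (z ^ (2 * m) - 1)"
    unfolding p2n_geometric_sums[OF assms] geom[symmetric] by (simp add: n algebra_simps)
  also have "\<dots> = z ^ (2 * n) * (z - \<rho>)\<^sup>2 - (\<rho> * z - 1)\<^sup>2"
    by (simp add: n power2_eq_square algebra_simps)
  finally show ?thesis .
qed

lemma p2n_at_0: "n \<ge> 1 \<Longrightarrow> p2n n \<rho> 0 = 1"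
  using p2n_closed_form[of n 0 \<rho>] by (simp add: power_0_left)

lemma p2n_at_rho:
  assumes "n \<ge> 1" and "\<rho>\<^sup>2 \<noteq> 1"
  shows "p2n n \<rho> \<rho> = 1 - \<rho>\<^sup>2"
proof -
  have "(\<rho>\<^sup>2 - 1) * p2n n \<rho> \<rho> = (\<rho>\<^sup>2 - 1) * (1 - \<rho>\<^sup>2)"
    using p2n_closed_form[OF assms(1), of \<rho> \<rho>] by (simp add: power2_eq_square algebra_simps)
  then show ?thesis
    using assms(2) by simp
qed

text \<open>With \<open>U\<^sub>j\<close> the Chebyshev polynomials of the second kind,
  \<open>kms_eigen_seq \<rho> t j = U\<^sub>j(t/2) - \<rho> U\<^sub>j\<^sub>-\<^sub>1(t/2)\<close>.\<close>
fun kms_eigen_seq :: "'a::comm_ring_1 \<Rightarrow> 'a \<Rightarrow> nat \<Rightarrow> 'a" where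
  "kms_eigen_seq \<rho> t 0 = 1"
| "kms_eigen_seq \<rho> t (Suc 0) = t - \<rho>"
| "kms_eigen_seq \<rho> t (Suc (Suc j)) = t * kms_eigen_seq \<rho> t (Suc j) - kms_eigen_seq \<rho> t j"

definition kms_secular :: "'a::comm_ring_1 \<Rightarrow> 'a \<Rightarrow> nat \<Rightarrow> 'a" where
  "kms_secular \<rho> t n = kms_eigen_seq \<rho> t n - \<rho> * kms_eigen_seq \<rho> t (n - 1)"

lemma kms_eigen_seq_joukowski:
  fixes z :: "'a::field"
  assumes "z \<noteq> 0"
  shows "z ^ j * kms_eigen_seq \<rho> (z + 1 / z) j
           = (\<Sum>k<j + 1. (z\<^sup>2) ^ k) - \<rho> * z * (\<Sum>k<j. (z\<^sup>2) ^ k)"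
proof (induction \<rho> "z + 1 / z" j rule: kms_eigen_seq.induct)
  case (1 \<rho>)
  then show ?case by simp
next
  case (2 \<rho>)
  then show ?case using assms by (simp add: field_simps power2_eq_square)
next
  case (3 \<rho> j)
  have "z ^ Suc (Suc j) * kms_eigen_seq \<rho> (z + 1 / z) (Suc (Suc j))
      = (z\<^sup>2 + 1) * (z ^ Suc j * kms_eigen_seq \<rho> (z + 1 / z) (Suc j))
        - z\<^sup>2 * (z ^ j * kms_eigen_seq \<rho> (z + 1 / z) j)"
    using assms by (simp add: field_simps power2_eq_square)
  then show ?case
    unfolding 3 by (simp add: power2_eq_square algebra_simps)
qed

lemma p2n_eq_kms_secular:
  assumes "n \<ge> 1" and "z \<noteq> 0"
  shows "p2n n \<rho> z = z ^ n * kms_secular \<rho> (z + 1 / z) n"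
proof -
  obtain m where n: "n = Suc m" using assms(1) by (cases n) auto
  have "z ^ n * kms_secular \<rho> (z + 1 / z) n
      = z ^ Suc m * kms_eigen_seq \<rho> (z + 1 / z) (Suc m) - \<rho> * z * (z ^ m * kms_eigen_seq \<rho> (z + 1 / z) m)"
    unfolding kms_secular_def n by (simp add: algebra_simps)
  also have "\<dots> = p2n n \<rho> z"
    unfolding kms_eigen_seq_joukowski[OF assms(2)] p2n_geometric_sums[OF assms(1)]
    by (simp add: n algebra_simps power2_eq_square)
  finally show ?thesis ..
qed

lemma p2n_reciprocal:
  assumes "n \<ge> 1" and "z \<noteq> 0"
  shows "z ^ (2 * n) * p2n n \<rho> (inverse z) = p2n n \<rho> z"
proof -
  have "inverse z + 1 / inverse z = z + 1 / z"
    by (simp add: field_simps)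
  moreover have "z ^ (2 * n) * inverse z ^ n = z ^ n"
    using assms(2) by (simp add: mult_2 power_add mult.assoc flip: power_mult_distrib)
  ultimately show ?thesis
    using assms by (simp add: p2n_eq_kms_secular mult.assoc[symmetric])
qed

lemma p2n_inverse_root:
  assumes "n \<ge> 1" and "p2n n \<rho> z = 0"
  shows "p2n n \<rho> (inverse z) = 0"
proof -
  have "z \<noteq> 0"
    using assms p2n_at_0 by force
  then show ?thesis
    using p2n_reciprocal[OF assms(1), of z \<rho>] assms(2) by simp
qed

lemma p2n_root_notin:
  assumes "n \<ge> 1" and "\<rho> \<notin> {-1, 0, 1}" and "p2n n \<rho> z = 0"
  shows "z \<notin> {0, \<rho>, 1 / \<rho>}"
proof -
  have "\<rho>\<^sup>2 \<noteq> 1"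
    using assms(2) by (auto simp: power2_eq_1_iff)
  then have "p2n n \<rho> \<rho> \<noteq> 0"
    using p2n_at_rho[OF assms(1)] by simp
  moreover have "p2n n \<rho> (1 / \<rho>) \<noteq> 0"
    using p2n_reciprocal[OF assms(1), of \<rho> \<rho>] \<open>p2n n \<rho> \<rho> \<noteq> 0\<close> assms(2)
    by (auto simp: inverse_eq_divide)
  ultimately show ?thesis
    using assms(1,3) p2n_at_0 by auto
qed

lemma kms_secular_at_rho_ne_0:
  fixes \<rho> :: complex
  assumes "n \<ge> 1" and "\<rho> \<notin> {-1, 0, 1}"
  shows "kms_secular \<rho> (\<rho> + 1 / \<rho>) n \<noteq> 0"
proof -
  have "\<rho>\<^sup>2 \<noteq> 1"
    using assms(2) by (auto simp: power2_eq_1_iff)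
  moreover have "\<rho> ^ n * kms_secular \<rho> (\<rho> + 1 / \<rho>) n = p2n n \<rho> \<rho>"
    using assms p2n_eq_kms_secular[OF assms(1), of \<rho> \<rho>] by simp
  ultimately show ?thesis
    using p2n_at_rho[OF assms(1)] by auto
qed

section \<open>The tridiagonal inverse of \<open>K\<^sub>n(\<rho>)\<close>\<close>

definition kms_mult :: "nat \<Rightarrow> 'a::comm_ring_1 \<Rightarrow> (nat \<Rightarrow> 'a) \<Rightarrow> nat \<Rightarrow> 'a" where
  "kms_mult n \<rho> f j = (\<Sum>k<n. \<rho> ^ nat \<bar>int j - int k\<bar> * f k)"

lemma KMS_mult_vec_nth:
  assumes "v \<in> carrier_vec n" and "j < n"
  shows "(KMS n \<rho> *\<^sub>v v) $ j = kms_mult n \<rho> (($) v) j"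
  using assms unfolding KMS_def kms_mult_def
  by (simp add: scalar_prod_def lessThan_atLeast0 algebra_simps)

lemma eigenvalue_KMS_iff_kms_mult:
  "eigenvalue (KMS n \<rho>) l \<longleftrightarrow> (\<exists>f. (\<exists>j<n. f j \<noteq> 0) \<and> (\<forall>j<n. kms_mult n \<rho> f j = l * f j))"
proof
  assume "eigenvalue (KMS n \<rho>) l"
  then obtain v where v: "v \<in> carrier_vec n" "v \<noteq> 0\<^sub>v n" "KMS n \<rho> *\<^sub>v v = l \<cdot>\<^sub>v v"
    unfolding eigenvalue_def eigenvector_def by (auto simp: KMS_def)
  have "\<exists>j<n. v $ j \<noteq> 0"
    using v(1,2) by (auto intro!: eq_vecI)
  moreover have "kms_mult n \<rho> (($) v) j = l * v $ j" if "j < n" for j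
    using v(1,3) that KMS_mult_vec_nth[OF v(1) that, of \<rho>] by (metis carrier_vecD index_smult_vec(1))
  ultimately show "\<exists>f. (\<exists>j<n. f j \<noteq> 0) \<and> (\<forall>j<n. kms_mult n \<rho> f j = l * f j)"
    by blast
next
  assume "\<exists>f. (\<exists>j<n. f j \<noteq> 0) \<and> (\<forall>j<n. kms_mult n \<rho> f j = l * f j)"
  then obtain f where f: "\<exists>j<n. f j \<noteq> 0" "\<forall>j<n. kms_mult n \<rho> f j = l * f j"
    by blast
  define v where "v = vec n f"
  have v: "v \<in> carrier_vec n"
    by (simp add: v_def)
  have "(KMS n \<rho> *\<^sub>v v) $ j = (l \<cdot>\<^sub>v v) $ j" if "j < n" for j
    using KMS_mult_vec_nth[OF v that, of \<rho>] f(2) that by (simp add: kms_mult_def v_def)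
  then have "KMS n \<rho> *\<^sub>v v = l \<cdot>\<^sub>v v"
    using v by (intro eq_vecI) (auto simp: KMS_def)
  moreover have "v \<noteq> 0\<^sub>v n"
    using f(1) by (metis v_def index_vec index_zero_vec(1))
  ultimately show "eigenvalue (KMS n \<rho>) l"
    unfolding eigenvalue_def eigenvector_def using v by (auto simp: KMS_def)
qed

text \<open>\<open>(1 - \<rho>\<^sup>2) K\<^sub>n(\<rho>)\<^sup>-\<^sup>1\<close> applied to \<open>g\<close>; only meaningful for \<open>n \<ge> 2\<close>.\<close>
definition kms_tridiag :: "nat \<Rightarrow> 'a::comm_ring_1 \<Rightarrow> (nat \<Rightarrow> 'a) \<Rightarrow> nat \<Rightarrow> 'a" where
  "kms_tridiag n \<rho> g j =
     (if j = 0 then g 0 - \<rho> * g 1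
      else if j = n - 1 then g j - \<rho> * g (j - 1)
      else (1 + \<rho>\<^sup>2) * g j - \<rho> * (g (j - 1) + g (j + 1)))"

lemma kms_tridiag_cong:
  assumes "n \<ge> 2" and "j < n" and "\<And>i. i < n \<Longrightarrow> f i = g i"
  shows "kms_tridiag n \<rho> f j = kms_tridiag n \<rho> g j"
  using assms by (simp add: kms_tridiag_def)

lemma kms_tridiag_linear:
  "kms_tridiag n \<rho> (\<lambda>i. \<Sum>k\<in>S. c k * g k i) j = (\<Sum>k\<in>S. c k * kms_tridiag n \<rho> (g k) j)"
  by (simp add: kms_tridiag_def sum_distrib_left sum.distrib sum_subtractf algebra_simps)

lemma kms_tridiag_scale:
  "kms_tridiag n \<rho> (\<lambda>i. c * g i) j = c * kms_tridiag n \<rho> g j"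
  by (simp add: kms_tridiag_def algebra_simps)

lemma kms_tridiag_diff:
  "kms_tridiag n \<rho> (\<lambda>i. f i - g i) j = kms_tridiag n \<rho> f j - kms_tridiag n \<rho> g j"
  by (simp add: kms_tridiag_def algebra_simps)

lemma kms_tridiag_column:
  assumes "n \<ge> 2" and "j < n" and "k < n"
  shows "kms_tridiag n \<rho> (\<lambda>i. \<rho> ^ nat \<bar>int i - int k\<bar>) j = (if j = k then 1 - \<rho>\<^sup>2 else 0)"
proof -
  define e where "e = (\<lambda>i. \<rho> ^ nat \<bar>int i - int k\<bar>)"
  consider (below) d where "k = j + Suc d" | (diag) "k = j" | (above) d where "j = k + Suc d"
    by (metis add_Suc_right less_imp_Suc_add linorder_neqE_nat)
  then have "kms_tridiag n \<rho> e j = (if j = k then 1 - \<rho>\<^sup>2 else 0)"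
  proof cases
    case below
    then have "e j = \<rho> ^ Suc d" "e (j + 1) = \<rho> ^ d" "j \<noteq> 0 \<Longrightarrow> e (j - 1) = \<rho> ^ Suc (Suc d)"
      by (auto simp: e_def nat_add_distrib)
    moreover have "j \<noteq> n - 1" "j \<noteq> k"
      using below assms by auto
    ultimately show ?thesis
      by (auto simp: kms_tridiag_def power2_eq_square algebra_simps)
  next
    case diag
    then have "e j = 1" "e (j + 1) = \<rho>" "j \<noteq> 0 \<Longrightarrow> e (j - 1) = \<rho>"
      by (auto simp: e_def)
    with diag show ?thesis
      by (auto simp: kms_tridiag_def power2_eq_square algebra_simps)
  next
    case above
    then have "e j = \<rho> ^ Suc d" "e (j - 1) = \<rho> ^ d" "e (j + 1) = \<rho> ^ Suc (Suc d)"
      by (auto simp: e_def nat_add_distrib)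
    moreover have "j \<noteq> 0" "j \<noteq> k"
      using above by auto
    ultimately show ?thesis
      by (auto simp: kms_tridiag_def power2_eq_square algebra_simps)
  qed
  then show ?thesis
    unfolding e_def .
qed

lemma kms_tridiag_kms_mult:
  assumes "n \<ge> 2" and "j < n"
  shows "kms_tridiag n \<rho> (kms_mult n \<rho> f) j = (1 - \<rho>\<^sup>2) * f j"
proof -
  have "kms_mult n \<rho> f = (\<lambda>i. \<Sum>k<n. f k * \<rho> ^ nat \<bar>int i - int k\<bar>)"
    by (simp add: fun_eq_iff kms_mult_def mult.commute)
  then have "kms_tridiag n \<rho> (kms_mult n \<rho> f) j
      = (\<Sum>k<n. f k * (if j = k then 1 - \<rho>\<^sup>2 else 0))"
    using assms by (simp add: kms_tridiag_linear kms_tridiag_column)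
  also have "\<dots> = (\<Sum>k<n. if j = k then (1 - \<rho>\<^sup>2) * f k else 0)"
    by (rule sum.cong) auto
  also have "\<dots> = (1 - \<rho>\<^sup>2) * f j"
    using assms(2) by simp
  finally show ?thesis .
qed

section \<open>Solutions of the tridiagonal eigen-equation\<close>

lemma kms_tridiag_inner_row:
  fixes \<rho> t \<mu> :: "'a::comm_ring_1"
  assumes "\<rho> * t = 1 + \<rho>\<^sup>2 - \<mu>" and f: "\<forall>i<n. f i = f 0 * kms_eigen_seq \<rho> t i"
    and "j + 2 \<le> n"
  shows "kms_tridiag n \<rho> f j = \<mu> * f j"
proof -
  have \<mu>: "\<mu> = 1 + \<rho>\<^sup>2 - \<rho> * t"
    using assms(1) by simp
  show ?thesis
  proof (cases j)
    case 0
    have f1: "f (Suc 0) = f 0 * (t - \<rho>)"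
      using f[rule_format, of 1] assms(3) by simp
    show ?thesis
      using 0 by (simp add: kms_tridiag_def f1 \<mu> algebra_simps power2_eq_square)
  next
    case (Suc i)
    have "f (Suc (Suc i)) = t * f (Suc i) - f i"
      using f[rule_format, of i] f[rule_format, of "Suc i"] f[rule_format, of "Suc (Suc i)"] Suc assms(3)
      by (simp add: algebra_simps)
    moreover have "j \<noteq> n - 1"
      using assms(3) by linarith
    ultimately show ?thesis
      using Suc by (simp add: kms_tridiag_def \<mu> algebra_simps power2_eq_square)
  qed
qed

lemma kms_tridiag_last_row:
  fixes \<rho> t \<mu> :: "'a::comm_ring_1"
  assumes "\<rho> * t = 1 + \<rho>\<^sup>2 - \<mu>" and f: "\<forall>i<n. f i = f 0 * kms_eigen_seq \<rho> t i"
    and "n \<ge> 2"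
  shows "kms_tridiag n \<rho> f (n - 1) - \<mu> * f (n - 1) = \<rho> * (f 0 * kms_secular \<rho> t n)"
proof -
  obtain m where n: "n = Suc (Suc m)"
    using assms(3) by (metis add_2_eq_Suc le_Suc_ex)
  have \<mu>: "\<mu> = 1 + \<rho>\<^sup>2 - \<rho> * t"
    using assms(1) by simp
  show ?thesis
    using f[rule_format, of m] f[rule_format, of "Suc m"] n
    by (simp add: kms_tridiag_def kms_secular_def \<mu> algebra_simps power2_eq_square)
qed

lemma kms_tridiag_eigen_imp_seq:
  fixes \<rho> t \<mu> :: "'a::idom"
  assumes "\<rho> \<noteq> 0" and "\<rho> * t = 1 + \<rho>\<^sup>2 - \<mu>" and rows: "\<forall>j<n. kms_tridiag n \<rho> f j = \<mu> * f j"
  shows "\<forall>j<n. f j = f 0 * kms_eigen_seq \<rho> t j"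
proof -
  have \<mu>: "\<mu> = 1 + \<rho>\<^sup>2 - \<rho> * t"
    using assms(2) by simp
  have "j < n \<longrightarrow> f j = f 0 * kms_eigen_seq \<rho> t j" for j
  proof (induction j rule: induct_nat_012)
    case 1
    show ?case
    proof
      assume "Suc 0 < n"
      then have "\<rho> * (f 1 - f 0 * (t - \<rho>)) = 0"
        using rows[rule_format, of 0] by (simp add: kms_tridiag_def \<mu> algebra_simps power2_eq_square)
      then show "f (Suc 0) = f 0 * kms_eigen_seq \<rho> t (Suc 0)"
        using assms(1) by simp
    qed
  next
    case (ge2 j)
    show ?case
    proof
      assume j: "Suc (Suc j) < n"
      have "Suc j \<noteq> n - 1"
        using j by linarith
      then have "\<rho> * (f (Suc (Suc j)) - (t * f (Suc j) - f j)) = 0"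
        using rows[rule_format, of "Suc j"] j
        by (simp add: kms_tridiag_def \<mu> algebra_simps power2_eq_square)
      then have "f (Suc (Suc j)) = t * f (Suc j) - f j"
        using assms(1) by simp
      then show "f (Suc (Suc j)) = f 0 * kms_eigen_seq \<rho> t (Suc (Suc j))"
        using ge2 j by (simp add: algebra_simps)
    qed
  qed simp
  then show ?thesis
    by blast
qed

lemma kms_tridiag_eigen_iff:
  fixes \<rho> t \<mu> :: "'a::idom"
  assumes "n \<ge> 2" and "\<rho> \<noteq> 0" and "\<rho> * t = 1 + \<rho>\<^sup>2 - \<mu>"
  shows "(\<forall>j<n. kms_tridiag n \<rho> f j = \<mu> * f j) \<longleftrightarrow>
           (\<forall>j<n. f j = f 0 * kms_eigen_seq \<rho> t j) \<and> f 0 * kms_secular \<rho> t n = 0"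
proof
  assume rows: "\<forall>j<n. kms_tridiag n \<rho> f j = \<mu> * f j"
  note seq = kms_tridiag_eigen_imp_seq[OF assms(2,3) rows]
  have "\<rho> * (f 0 * kms_secular \<rho> t n) = 0"
    using kms_tridiag_last_row[OF assms(3) seq assms(1)] rows assms(1) by simp
  then have "f 0 * kms_secular \<rho> t n = 0"
    using assms(2) by simp
  with seq show "(\<forall>j<n. f j = f 0 * kms_eigen_seq \<rho> t j) \<and> f 0 * kms_secular \<rho> t n = 0"
    by blast
next
  assume "(\<forall>j<n. f j = f 0 * kms_eigen_seq \<rho> t j) \<and> f 0 * kms_secular \<rho> t n = 0"
  then have seq: "\<forall>j<n. f j = f 0 * kms_eigen_seq \<rho> t j" and secular: "f 0 * kms_secular \<rho> t n = 0"
    by blast+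
  show "\<forall>j<n. kms_tridiag n \<rho> f j = \<mu> * f j"
  proof (intro allI impI)
    fix j
    assume "j < n"
    then consider "j + 2 \<le> n" | "j = n - 1"
      by linarith
    then show "kms_tridiag n \<rho> f j = \<mu> * f j"
    proof cases
      case 1
      then show ?thesis
        by (rule kms_tridiag_inner_row[OF assms(3) seq])
    next
      case 2
      then show ?thesis
        using kms_tridiag_last_row[OF assms(3) seq assms(1)] secular by simp
    qed
  qed
qed

text \<open>\<open>kms_tridiag g = 0\<close> is the eigen-equation with \<open>\<mu> = 0\<close>, i.e. \<open>t = \<rho> + 1/\<rho>\<close>, where the
  boundary condition fails because \<open>p\<^sub>2\<^sub>n(\<rho>, \<rho>) = 1 - \<rho>\<^sup>2 \<noteq> 0\<close>.\<close>
lemma kms_tridiag_injective: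
  fixes \<rho> :: complex
  assumes "n \<ge> 2" and "\<rho> \<notin> {-1, 0, 1}" and "\<forall>j<n. kms_tridiag n \<rho> g j = 0"
  shows "\<forall>j<n. g j = 0"
proof -
  have \<rho>: "\<rho> \<noteq> 0"
    using assms(2) by simp
  have t: "\<rho> * (\<rho> + 1 / \<rho>) = 1 + \<rho>\<^sup>2 - 0"
    using \<rho> by (simp add: field_simps power2_eq_square)
  have "\<forall>j<n. kms_tridiag n \<rho> g j = 0 * g j"
    using assms(3) by simp
  then have "(\<forall>j<n. g j = g 0 * kms_eigen_seq \<rho> (\<rho> + 1 / \<rho>) j)
      \<and> g 0 * kms_secular \<rho> (\<rho> + 1 / \<rho>) n = 0"
    by (rule iffD1[OF kms_tridiag_eigen_iff[OF assms(1) \<rho> t]])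
  moreover have "kms_secular \<rho> (\<rho> + 1 / \<rho>) n \<noteq> 0"
    using kms_secular_at_rho_ne_0 assms(1,2) by simp
  ultimately show ?thesis
    by simp
qed

section \<open>Eigenvalues of \<open>K\<^sub>n(\<rho>)\<close>\<close>

lemma kms_mult_eigen_iff:
  fixes \<rho> l :: complex
  assumes "n \<ge> 2" and "\<rho> \<notin> {-1, 0, 1}"
  shows "(\<forall>j<n. kms_mult n \<rho> f j = l * f j) \<longleftrightarrow>
           (\<forall>j<n. l * kms_tridiag n \<rho> f j = (1 - \<rho>\<^sup>2) * f j)"
proof
  assume eig: "\<forall>j<n. kms_mult n \<rho> f j = l * f j"
  show "\<forall>j<n. l * kms_tridiag n \<rho> f j = (1 - \<rho>\<^sup>2) * f j"
  proof (intro allI impI)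
    fix j
    assume j: "j < n"
    have "l * kms_tridiag n \<rho> f j = kms_tridiag n \<rho> (\<lambda>i. l * f i) j"
      by (simp add: kms_tridiag_scale)
    also have "\<dots> = kms_tridiag n \<rho> (kms_mult n \<rho> f) j"
      using assms(1) j eig by (intro kms_tridiag_cong) auto
    also have "\<dots> = (1 - \<rho>\<^sup>2) * f j"
      using assms(1) j by (rule kms_tridiag_kms_mult)
    finally show "l * kms_tridiag n \<rho> f j = (1 - \<rho>\<^sup>2) * f j" .
  qed
next
  assume tri: "\<forall>j<n. l * kms_tridiag n \<rho> f j = (1 - \<rho>\<^sup>2) * f j"
  have "kms_tridiag n \<rho> (\<lambda>i. kms_mult n \<rho> f i - l * f i) j = 0" if "j < n" for j
    using tri that assms(1) by (simp add: kms_tridiag_diff kms_tridiag_scale kms_tridiag_kms_mult)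
  then have "\<forall>j<n. kms_mult n \<rho> f j - l * f j = 0"
    using kms_tridiag_injective[OF assms] by blast
  then show "\<forall>j<n. kms_mult n \<rho> f j = l * f j"
    by simp
qed

lemma kms_tridiag_nontrivial_solution_iff:
  fixes \<rho> l :: "'a::field"
  assumes "n \<ge> 2" and "\<rho> \<noteq> 0" and "\<rho>\<^sup>2 \<noteq> 1"
  shows "(\<exists>f. (\<exists>j<n. f j \<noteq> 0) \<and> (\<forall>j<n. l * kms_tridiag n \<rho> f j = (1 - \<rho>\<^sup>2) * f j)) \<longleftrightarrow>
           l \<noteq> 0 \<and> kms_secular \<rho> ((\<rho>\<^sup>2 * (l + 1) + l - 1) / (l * \<rho>)) n = 0"
    (is "?eig \<longleftrightarrow> _ \<and> kms_secular \<rho> ?t n = 0")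
proof -
  have t: "\<rho> * ?t = 1 + \<rho>\<^sup>2 - (1 - \<rho>\<^sup>2) / l" if "l \<noteq> 0"
    using that assms(2) by (simp add: field_simps)
  show ?thesis
  proof
    assume ?eig
    then obtain f j where f: "j < n" "f j \<noteq> 0" "\<forall>j<n. l * kms_tridiag n \<rho> f j = (1 - \<rho>\<^sup>2) * f j"
      by blast
    have l: "l \<noteq> 0"
    proof
      assume "l = 0"
      then have "(1 - \<rho>\<^sup>2) * f j = 0"
        using f(1,3) by simp
      with assms(3) f(2) show False
        by simp
    qed
    have "\<forall>j<n. kms_tridiag n \<rho> f j = (1 - \<rho>\<^sup>2) / l * f j"
      using f(3) l by (simp add: field_simps)
    then have seq: "\<forall>j<n. f j = f 0 * kms_eigen_seq \<rho> ?t j"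
      and secular: "f 0 * kms_secular \<rho> ?t n = 0"
      using kms_tridiag_eigen_iff[OF assms(1,2) t[OF l]] by blast+
    have "f 0 \<noteq> 0"
      using seq[rule_format, OF f(1)] f(2) by auto
    with l secular show "l \<noteq> 0 \<and> kms_secular \<rho> ?t n = 0"
      by simp
  next
    assume "l \<noteq> 0 \<and> kms_secular \<rho> ?t n = 0"
    then have l: "l \<noteq> 0" and secular: "kms_secular \<rho> ?t n = 0"
      by blast+
    let ?s = "kms_eigen_seq \<rho> ?t"
    have "\<forall>j<n. kms_tridiag n \<rho> ?s j = (1 - \<rho>\<^sup>2) / l * ?s j"
      using kms_tridiag_eigen_iff[OF assms(1,2) t[OF l], of ?s] secular by simp
    then have "\<forall>j<n. l * kms_tridiag n \<rho> ?s j = (1 - \<rho>\<^sup>2) * ?s j"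
      using l by simp
    moreover have "\<exists>j<n. ?s j \<noteq> 0"
      using assms(1) by (intro exI[of _ 0]) simp
    ultimately show ?eig
      by blast
  qed
qed

lemma eigenvalue_KMS_iff:
  fixes \<rho> l :: complex
  assumes "n \<ge> 2" and "\<rho> \<notin> {-1, 0, 1}"
  shows "eigenvalue (KMS n \<rho>) l \<longleftrightarrow>
           l \<noteq> 0 \<and> kms_secular \<rho> ((\<rho>\<^sup>2 * (l + 1) + l - 1) / (l * \<rho>)) n = 0"
proof -
  have "\<rho> \<noteq> 0" and "\<rho>\<^sup>2 \<noteq> 1"
    using assms(2) by (auto simp: power2_eq_1_iff)
  then show ?thesis
    unfolding eigenvalue_KMS_iff_kms_mult kms_mult_eigen_iff[OF assms]
    by (rule kms_tridiag_nontrivial_solution_iff[OF assms(1)])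
qed

lemma kms_eigenvalue_param_inverse:
  fixes z \<rho> :: "'a::field"
  shows "z * (1 - \<rho>\<^sup>2) / ((z - \<rho>) * (1 - \<rho> * z))
           = inverse z * (1 - \<rho>\<^sup>2) / ((inverse z - \<rho>) * (1 - \<rho> * inverse z))"
proof (cases "z = 0")
  case False
  define D where "D = (z - \<rho>) * (1 - \<rho> * z)"
  have "(inverse z - \<rho>) * (1 - \<rho> * inverse z) = D / z\<^sup>2"
    using False by (simp add: D_def field_simps power2_eq_square)
  then have "inverse z * (1 - \<rho>\<^sup>2) / ((inverse z - \<rho>) * (1 - \<rho> * inverse z))
      = inverse z * z\<^sup>2 * (1 - \<rho>\<^sup>2) / D"
    by (simp add: divide_divide_eq_right mult_ac)
  also have "inverse z * z\<^sup>2 = z"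
    using False by (simp add: power2_eq_square)
  finally show ?thesis
    by (simp add: D_def)
qed simp

lemma kms_eigenvalue_param_joukowski:
  fixes z \<rho> :: "'a::field"
  assumes "z \<notin> {0, \<rho>, 1 / \<rho>}" and "\<rho> \<noteq> 0" and "\<rho>\<^sup>2 \<noteq> 1"
  defines "l \<equiv> z * (1 - \<rho>\<^sup>2) / ((z - \<rho>) * (1 - \<rho> * z))"
  shows "l \<noteq> 0" and "(\<rho>\<^sup>2 * (l + 1) + l - 1) / (l * \<rho>) = z + 1 / z"
proof -
  have z: "z \<noteq> 0" "z - \<rho> \<noteq> 0" "1 - \<rho> * z \<noteq> 0"
    using assms(1,2) by (auto simp: field_simps)
  moreover have "1 - \<rho>\<^sup>2 \<noteq> 0"
    using assms(3) by simp
  ultimately show l: "l \<noteq> 0"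
    by (simp add: l_def)
  define D where "D = (z - \<rho>) * (1 - \<rho> * z)"
  have D: "D \<noteq> 0"
    using z by (simp add: D_def)
  have "\<rho>\<^sup>2 * (l + 1) + l - 1 = ((1 - \<rho>\<^sup>2) * z * (1 + \<rho>\<^sup>2) - (1 - \<rho>\<^sup>2) * D) / D"
    using D unfolding l_def D_def[symmetric] by (simp add: field_simps)
  also have "(1 - \<rho>\<^sup>2) * z * (1 + \<rho>\<^sup>2) - (1 - \<rho>\<^sup>2) * D = (1 - \<rho>\<^sup>2) * \<rho> * (z * z + 1)"
    by (simp add: D_def algebra_simps power2_eq_square)
  also have "(1 - \<rho>\<^sup>2) * \<rho> * (z * z + 1) / D = l * \<rho> * (z + 1 / z)"
    using z D unfolding l_def D_def[symmetric] by (simp add: field_simps)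
  finally show "(\<rho>\<^sup>2 * (l + 1) + l - 1) / (l * \<rho>) = z + 1 / z"
    using l assms(2) by simp
qed

lemma p2n_root_eigenvalue:
  assumes "n \<ge> 2" and "\<rho> \<notin> {-1, 0, 1}" and "p2n n \<rho> z = 0"
  shows "eigenvalue (KMS n \<rho>) (z * (1 - \<rho>\<^sup>2) / ((z - \<rho>) * (1 - \<rho> * z)))"
proof -
  have z: "z \<notin> {0, \<rho>, 1 / \<rho>}"
    using assms(1) p2n_root_notin[OF _ assms(2,3)] by simp
  have "\<rho> \<noteq> 0" "\<rho>\<^sup>2 \<noteq> 1"
    using assms(2) by (auto simp: power2_eq_1_iff)
  note param = kms_eigenvalue_param_joukowski[OF z this]
  have "z ^ n * kms_secular \<rho> (z + 1 / z) n = 0"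
    using p2n_eq_kms_secular[of n z \<rho>] assms z by simp
  then have "kms_secular \<rho> (z + 1 / z) n = 0"
    using z by simp
  then show ?thesis
    using eigenvalue_KMS_iff[OF assms(1,2)] param by simp
qed

lemma eigenvalue_KMS_p2n_roots:
  fixes \<rho> l :: complex
  assumes "n \<ge> 2" and "\<rho> \<notin> {-1, 0, 1}" and "eigenvalue (KMS n \<rho>) l"
  defines "\<tau> \<equiv> (\<rho>\<^sup>2 * (l + 1) + l - 1) / (2 * l * \<rho>)"
  shows "l \<noteq> 0" and "p2n n \<rho> (\<tau> + csqrt (\<tau>\<^sup>2 - 1)) = 0" and "p2n n \<rho> (\<tau> - csqrt (\<tau>\<^sup>2 - 1)) = 0"
proof -
  have "(\<rho>\<^sup>2 * (l + 1) + l - 1) / (l * \<rho>) = 2 * \<tau>"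
    unfolding \<tau>_def by (simp only: mult.assoc times_divide_eq_right mult_divide_mult_cancel_left_if) simp
  then have l: "l \<noteq> 0" and secular: "kms_secular \<rho> (2 * \<tau>) n = 0"
    using eigenvalue_KMS_iff[OF assms(1,2)] assms(3) by simp_all
  show "l \<noteq> 0"
    by (rule l)
  have root: "p2n n \<rho> z = 0" if "z * w = 1" and "z + w = 2 * \<tau>" for z w
  proof -
    have "z \<noteq> 0"
      using that(1) by auto
    moreover have "1 / z = w"
      using that(1) \<open>z \<noteq> 0\<close> by (simp add: divide_eq_eq mult.commute)
    ultimately show ?thesis
      using p2n_eq_kms_secular[of n z \<rho>] assms(1) secular that(2) by simp
  qed
  have "(\<tau> + csqrt (\<tau>\<^sup>2 - 1)) * (\<tau> - csqrt (\<tau>\<^sup>2 - 1)) = 1"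
    by (simp add: algebra_simps power2_eq_square[symmetric])
  then show "p2n n \<rho> (\<tau> + csqrt (\<tau>\<^sup>2 - 1)) = 0" and "p2n n \<rho> (\<tau> - csqrt (\<tau>\<^sup>2 - 1)) = 0"
    by (auto intro: root simp: mult.commute)
qed

theorem theorem3p3:
  fixes n :: nat and \<rho> :: complex
  assumes "n \<ge> 2" and "\<rho> \<notin> {-1, 0, 1}"
  shows "(\<forall>z. p2n n \<rho> z = 0 \<longrightarrow>
            z \<noteq> 0 \<and> p2n n \<rho> (inverse z) = 0 \<and> z \<notin> {\<rho>, 1 / \<rho>} \<and>
            z * (1 - \<rho>\<^sup>2) / ((z - \<rho>) * (1 - \<rho> * z))
              = inverse z * (1 - \<rho>\<^sup>2) / ((inverse z - \<rho>) * (1 - \<rho> * inverse z)) \<and>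
            eigenvalue (KMS n \<rho>) (z * (1 - \<rho>\<^sup>2) / ((z - \<rho>) * (1 - \<rho> * z))))
       \<and> (\<forall>l. eigenvalue (KMS n \<rho>) l \<longrightarrow>
            (let \<tau> = (\<rho>\<^sup>2 * (l + 1) + l - 1) / (2 * l * \<rho>) in
              l \<noteq> 0 \<and> p2n n \<rho> (\<tau> + csqrt (\<tau>\<^sup>2 - 1)) = 0 \<and>
              p2n n \<rho> (\<tau> - csqrt (\<tau>\<^sup>2 - 1)) = 0))"
proof -
  have n: "n \<ge> 1"
    using assms(1) by simp
  have "z \<notin> {0, \<rho>, 1 / \<rho>} \<and> p2n n \<rho> (inverse z) = 0 \<and>
          eigenvalue (KMS n \<rho>) (z * (1 - \<rho>\<^sup>2) / ((z - \<rho>) * (1 - \<rho> * z)))"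
    if "p2n n \<rho> z = 0" for z
    using p2n_root_notin[OF n assms(2) that] p2n_inverse_root[OF n that]
      p2n_root_eigenvalue[OF assms that] by blast
  moreover have "let \<tau> = (\<rho>\<^sup>2 * (l + 1) + l - 1) / (2 * l * \<rho>) in
              l \<noteq> 0 \<and> p2n n \<rho> (\<tau> + csqrt (\<tau>\<^sup>2 - 1)) = 0 \<and> p2n n \<rho> (\<tau> - csqrt (\<tau>\<^sup>2 - 1)) = 0"
    if "eigenvalue (KMS n \<rho>) l" for l
    using eigenvalue_KMS_p2n_roots[OF assms that] by (simp add: Let_def)
  ultimately show ?thesis
    using kms_eigenvalue_param_inverse by auto
qed

end
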